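(* Let $n\ge0$. If a variety $\mathcal V$ has $n+2$ Gumm terms, then $\mathcal V$ is $(2n+2)$-modular, i.e. it satisfies $\alpha(\beta\circ\alpha\gamma\circ\beta)\subseteq\alpha\beta\circ_{2n+2}\alpha\gamma$ for all congruences $\alpha,\beta,\gamma$.
   Context: $\circ$ is relational composition, juxtaposition is intersection. For relations $X,Y$ and $m\ge1$, $X\circ_m Y$ denotes $X\circ Y\circ X\circ\cdots$ with $m$ factors. A variety has $n+2$ Gumm terms if it has ternary terms $p,j_1,\dots,j_{n+1}$ satisfying: $x=j_i(x,y,x)$ for all $i$; $x=p(x,z,z)$; $p(x,x,z)=j_1(x,x,z)$; $j_i(x,z,z)=j_{i+1}(x,z,z)$ for odd $i\le n$; $j_i(x,x,z)=j_{i+1}(x,x,z)$ for even $i\le n$; $j_{n+1}(x,y,z)=z$. *)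

theory Defs
  imports Main
begin

datatype 'f uterm = Var nat | Fn 'f "'f uterm list"

record ('f, 'a) alg =
  univ :: "'a set"
  ops  :: "'f \<Rightarrow> 'a list \<Rightarrow> 'a"

definition algebra :: "('f \<Rightarrow> nat) \<Rightarrow> ('f, 'a) alg \<Rightarrow> bool" where
  "algebra ar A \<longleftrightarrow> univ A \<noteq> {} \<and>
     (\<forall>f xs. length xs = ar f \<and> set xs \<subseteq> univ A \<longrightarrow> ops A f xs \<in> univ A)"

fun wf_term :: "('f \<Rightarrow> nat) \<Rightarrow> 'f uterm \<Rightarrow> bool" where
  "wf_term ar (Var i) = True"
| "wf_term ar (Fn f ts) = (length ts = ar f \<and> (\<forall>t\<in>set ts. wf_term ar t))"

fun vars :: "'f uterm \<Rightarrow> nat set" where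
  "vars (Var i) = {i}"
| "vars (Fn f ts) = (\<Union>t\<in>set ts. vars t)"

fun eval :: "('f, 'a) alg \<Rightarrow> 'f uterm \<Rightarrow> (nat \<Rightarrow> 'a) \<Rightarrow> 'a" where
  "eval A (Var i) \<sigma> = \<sigma> i"
| "eval A (Fn f ts) \<sigma> = ops A f (map (\<lambda>t. eval A t \<sigma>) ts)"

definition ternary_term :: "('f \<Rightarrow> nat) \<Rightarrow> 'f uterm \<Rightarrow> bool" where
  "ternary_term ar t \<longleftrightarrow> wf_term ar t \<and> vars t \<subseteq> {0,1,2}"

definition tev :: "('f, 'a) alg \<Rightarrow> 'f uterm \<Rightarrow> 'a \<Rightarrow> 'a \<Rightarrow> 'a \<Rightarrow> 'a" where
  "tev A t x y z = eval A t (\<lambda>i. if i = 0 then x else if i = 1 then y else z)"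

definition satisfies :: "('f, 'a) alg \<Rightarrow> 'f uterm \<times> 'f uterm \<Rightarrow> bool" where
  "satisfies A e \<longleftrightarrow> (\<forall>\<sigma>. range \<sigma> \<subseteq> univ A \<longrightarrow> eval A (fst e) \<sigma> = eval A (snd e) \<sigma>)"

definition variety :: "('f \<Rightarrow> nat) \<Rightarrow> ('f uterm \<times> 'f uterm) set \<Rightarrow> ('f, 'a) alg set" where
  "variety ar \<Sigma> = {A. algebra ar A \<and> (\<forall>e\<in>\<Sigma>. satisfies A e)}"

definition congruence :: "('f \<Rightarrow> nat) \<Rightarrow> ('f, 'a) alg \<Rightarrow> 'a rel \<Rightarrow> bool" where
  "congruence ar A \<alpha> \<longleftrightarrow> equiv (univ A) \<alpha> \<and>
     (\<forall>f xs ys. length xs = ar f \<and> length ys = ar f \<and> set xs \<subseteq> univ A \<and> set ys \<subseteq> univ A \<and>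
        (\<forall>k < ar f. (xs ! k, ys ! k) \<in> \<alpha>) \<longrightarrow> (ops A f xs, ops A f ys) \<in> \<alpha>)"

text \<open>X \<circ>_m Y = X \<circ> Y \<circ> X \<circ> ... with m factors (only used for m \<ge> 1).\<close>
fun rcomp_alt :: "'a rel \<Rightarrow> 'a rel \<Rightarrow> nat \<Rightarrow> 'a rel" where
  "rcomp_alt X Y 0 = Id"
| "rcomp_alt X Y (Suc 0) = X"
| "rcomp_alt X Y (Suc (Suc m)) = X O rcomp_alt Y X (Suc m)"

definition has_gumm_terms ::
  "('f \<Rightarrow> nat) \<Rightarrow> ('f, 'a) alg set \<Rightarrow> nat \<Rightarrow> bool" where
  "has_gumm_terms ar V n \<longleftrightarrow> (\<exists>p j.
     ternary_term ar p \<and> (\<forall>i\<in>{1..n+1}. ternary_term ar (j i)) \<and>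
     (\<forall>A\<in>V. \<forall>x\<in>univ A. \<forall>y\<in>univ A. \<forall>z\<in>univ A.
        (\<forall>i\<in>{1..n+1}. tev A (j i) x y x = x) \<and>
        tev A p x z z = x \<and>
        tev A p x x z = tev A (j 1) x x z \<and>
        (\<forall>i. 1 \<le> i \<and> i \<le> n \<and> odd i \<longrightarrow> tev A (j i) x z z = tev A (j (i+1)) x z z) \<and>
        (\<forall>i. 1 \<le> i \<and> i \<le> n \<and> even i \<longrightarrow> tev A (j i) x x z = tev A (j (i+1)) x x z) \<and>
        tev A (j (n+1)) x y z = z))"

end

theory Submission
  imports Defs
begin

text \<open>Write \<open>B = \<alpha>\<beta>\<close>, \<open>C = \<alpha>\<gamma>\<close> and let \<open>x \<beta> u C v \<beta> z\<close> with \<open>x \<alpha> z\<close>.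
  The Gumm terms connect \<open>x = p(x,v,v)\<close> to \<open>z\<close> through \<open>p(x,u,v)\<close>, \<open>p(x,x,z) = j\<^sub>1(x,x,z)\<close>,
  \<open>j\<^sub>1(x,z,z) = j\<^sub>2(x,z,z)\<close>, \<open>j\<^sub>2(x,x,z) = j\<^sub>3(x,x,z)\<close>, \<dots>, \<open>j\<^sub>n\<^sub>+\<^sub>1(x,_,z) = z\<close>.
  Moving the middle argument of \<open>j\<^sub>i(x,_,z)\<close> along \<open>x \<beta> u \<gamma> v \<beta> z\<close> (or backwards)
  stays in the \<open>\<alpha>\<close>-class of \<open>x = j\<^sub>i(x,y,x)\<close>, so each \<open>j\<^sub>i\<close> contributes a segment
  \<open>B \<circ> C \<circ> B\<close>. Consecutive \<open>B\<close>-steps merge, giving \<open>x (C \<circ> B)\<^sup>n\<^sup>+\<^sup>1 z\<close>; applied to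
  \<open>(z, x)\<close> and taken converse, this yields \<open>x (B \<circ> C)\<^sup>n\<^sup>+\<^sup>1 z\<close>.\<close>

lemma converse_relpow:
  fixes R :: "'a rel"
  shows "(R ^^ n)\<inverse> = (R\<inverse>) ^^ n"
  by (induction n) (simp_all add: converse_relcomp relpow_commute)

lemma relpow_relcomp_absorb:
  assumes "B O B \<subseteq> B"
  shows "(C O B) ^^ Suc k O (B O C O B) \<subseteq> (C O B) ^^ Suc (Suc k)"
proof -
  have "(C O B) ^^ Suc k O (B O C O B) = (C O B) ^^ k O C O (B O B) O C O B"
    by (simp add: O_assoc)
  also have "\<dots> \<subseteq> (C O B) ^^ k O C O B O C O B"
    using assms by (intro relcomp_mono) auto
  also have "\<dots> = (C O B) ^^ Suc (Suc k)"
    by (simp add: O_assoc relpow_commute)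
  finally show ?thesis .
qed

lemma rcomp_alt_even: "rcomp_alt X Y (2 * k + 2) = (X O Y) ^^ (k + 1)"
proof (induction k)
  case 0
  then show ?case by simp
next
  case (Suc k)
  have "rcomp_alt X Y (2 * Suc k + 2) = (X O Y) O rcomp_alt X Y (2 * k + 2)"
    by (simp add: numeral_eq_Suc O_assoc)
  also have "\<dots> = (X O Y) ^^ (k + 1) O (X O Y)"
    using Suc by (simp only: relpow_commute)
  also have "\<dots> = (X O Y) ^^ (Suc k + 1)"
    by simp
  finally show ?case .
qed

lemma congruence_equiv: "congruence ar A \<theta> \<Longrightarrow> equiv (univ A) \<theta>"
  by (simp add: congruence_def)

lemma congruence_refl: "congruence ar A \<theta> \<Longrightarrow> a \<in> univ A \<Longrightarrow> (a, a) \<in> \<theta>"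
  by (meson congruence_equiv equivE refl_onD)

lemma congruence_sym: "congruence ar A \<theta> \<Longrightarrow> (a, b) \<in> \<theta> \<Longrightarrow> (b, a) \<in> \<theta>"
  by (meson congruence_equiv equivE symD)

lemma congruence_trans:
  "congruence ar A \<theta> \<Longrightarrow> (a, b) \<in> \<theta> \<Longrightarrow> (b, c) \<in> \<theta> \<Longrightarrow> (a, c) \<in> \<theta>"
  by (meson congruence_equiv equivE transD)

lemma congruence_in_univ: "congruence ar A \<theta> \<Longrightarrow> (a, b) \<in> \<theta> \<Longrightarrow> a \<in> univ A \<and> b \<in> univ A"
  by (meson congruence_equiv equiv_class_eq_iff)

lemma eval_congruence:
  assumes "congruence ar A \<theta>" and "wf_term ar t" and "\<And>i. (\<sigma> i, \<tau> i) \<in> \<theta>"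
  shows "(eval A t \<sigma>, eval A t \<tau>) \<in> \<theta>"
  using assms(2)
proof (induction t)
  case (Var i)
  then show ?case using assms(3) by simp
next
  case (Fn f ts)
  let ?xs = "map (\<lambda>t. eval A t \<sigma>) ts" and ?ys = "map (\<lambda>t. eval A t \<tau>) ts"
  have args: "\<forall>k < ar f. (?xs ! k, ?ys ! k) \<in> \<theta>"
    using Fn by auto
  moreover have "set ?xs \<subseteq> univ A" "set ?ys \<subseteq> univ A"
    using args Fn.prems congruence_in_univ[OF assms(1)] by (fastforce simp: in_set_conv_nth)+
  ultimately show ?case
    using assms(1) Fn.prems unfolding congruence_def by simp
qed

lemma tev_congruence:
  assumes "congruence ar A \<theta>" and "ternary_term ar t"
    and "(x, x') \<in> \<theta>" "(y, y') \<in> \<theta>" "(z, z') \<in> \<theta>"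
  shows "(tev A t x y z, tev A t x' y' z') \<in> \<theta>"
  unfolding tev_def
  using assms by (intro eval_congruence) (auto simp: ternary_term_def)

lemma tev_middle_congruence:
  assumes \<alpha>: "congruence ar A \<alpha>" and \<theta>: "congruence ar A \<theta>" and t: "ternary_term ar t"
    and xz: "(x, z) \<in> \<alpha>" and idem: "\<And>y. y \<in> univ A \<Longrightarrow> tev A t x y x = x"
    and cc': "(c, c') \<in> \<theta>"
  shows "(tev A t x c z, tev A t x c' z) \<in> \<alpha> \<inter> \<theta>"
proof
  have x: "x \<in> univ A" and z: "z \<in> univ A" and c: "c \<in> univ A" and c': "c' \<in> univ A"
    using congruence_in_univ[OF \<alpha> xz] congruence_in_univ[OF \<theta> cc'] by auto
  show "(tev A t x c z, tev A t x c' z) \<in> \<theta>"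
    using x z by (intro tev_congruence[OF \<theta> t] congruence_refl[OF \<theta>] cc')
  have "(tev A t x y z, x) \<in> \<alpha>" if "y \<in> univ A" for y
    using tev_congruence[OF \<alpha> t congruence_refl[OF \<alpha> x] congruence_refl[OF \<alpha> that]
        congruence_sym[OF \<alpha> xz]] idem[OF that] by simp
  then show "(tev A t x c z, tev A t x c' z) \<in> \<alpha>"
    using c c' by (meson \<alpha> congruence_sym congruence_trans)
qed

definition gumm_identities :: "('f, 'a) alg \<Rightarrow> nat \<Rightarrow> 'f uterm \<Rightarrow> (nat \<Rightarrow> 'f uterm) \<Rightarrow> bool"
  where "gumm_identities A n p j \<longleftrightarrow> (\<forall>x\<in>univ A. \<forall>y\<in>univ A. \<forall>z\<in>univ A.
        (\<forall>i\<in>{1..n+1}. tev A (j i) x y x = x) \<and>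
        tev A p x z z = x \<and>
        tev A p x x z = tev A (j 1) x x z \<and>
        (\<forall>i. 1 \<le> i \<and> i \<le> n \<and> odd i \<longrightarrow> tev A (j i) x z z = tev A (j (i+1)) x z z) \<and>
        (\<forall>i. 1 \<le> i \<and> i \<le> n \<and> even i \<longrightarrow> tev A (j i) x x z = tev A (j (i+1)) x x z) \<and>
        tev A (j (n+1)) x y z = z)"

lemma has_gumm_terms_iff:
  "has_gumm_terms ar V n \<longleftrightarrow> (\<exists>p j. ternary_term ar p \<and> (\<forall>i\<in>{1..n+1}. ternary_term ar (j i)) \<and>
     (\<forall>A\<in>V. gumm_identities A n p j))"
  unfolding has_gumm_terms_def gumm_identities_def ..

lemma gumm_chain:
  assumes \<alpha>: "congruence ar A \<alpha>" and \<beta>: "congruence ar A \<beta>" and \<gamma>: "congruence ar A \<gamma>"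
    and p: "ternary_term ar p" and j: "\<forall>i\<in>{1..n+1}. ternary_term ar (j i)"
    and ids: "gumm_identities A n p j"
    and xz: "(x, z) \<in> \<alpha>" and path: "(x, z) \<in> \<beta> O (\<alpha> \<inter> \<gamma>) O \<beta>"
  shows "(x, z) \<in> ((\<alpha> \<inter> \<gamma>) O (\<alpha> \<inter> \<beta>)) ^^ Suc n"
proof -
  let ?B = "\<alpha> \<inter> \<beta>" and ?C = "\<alpha> \<inter> \<gamma>"
  obtain u v where xu: "(x, u) \<in> \<beta>" and uv: "(u, v) \<in> ?C" and vz: "(v, z) \<in> \<beta>"
    using path by blast
  have U: "x \<in> univ A" "u \<in> univ A" "v \<in> univ A" "z \<in> univ A"
    using congruence_in_univ[OF \<beta> xu] congruence_in_univ[OF \<beta> vz] by auto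
  have j_idem: "\<And>i y. i \<in> {1..n+1} \<Longrightarrow> y \<in> univ A \<Longrightarrow> tev A (j i) x y x = x"
    and p_left: "tev A p x v v = x" and p_right: "tev A p x z z = x"
    and p_j1: "tev A p x x z = tev A (j 1) x x z"
    and j_odd: "\<And>i. 1 \<le> i \<Longrightarrow> i \<le> n \<Longrightarrow> odd i \<Longrightarrow> tev A (j i) x z z = tev A (j (i+1)) x z z"
    and j_even: "\<And>i. 1 \<le> i \<Longrightarrow> i \<le> n \<Longrightarrow> even i \<Longrightarrow> tev A (j i) x x z = tev A (j (i+1)) x x z"
    and j_last: "\<And>y. y \<in> univ A \<Longrightarrow> tev A (j (n+1)) x y z = z"
    using ids U unfolding gumm_identities_def by blast+
  define s where "s k = (if even k then x else z)" for k :: nat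
  define t where "t k = tev A (j (Suc k)) x (s k) z" for k
  have B_trans: "?B O ?B \<subseteq> ?B"
    using congruence_trans[OF \<alpha>] congruence_trans[OF \<beta>] by blast
  have first: "(x, t 0) \<in> ?C O ?B"
  proof
    have "(v, u) \<in> \<alpha>" "(v, u) \<in> \<gamma>"
      using uv congruence_sym[OF \<alpha>] congruence_sym[OF \<gamma>] by auto
    then have "(tev A p x v v, tev A p x u v) \<in> ?C"
      using tev_congruence[OF \<alpha> p congruence_refl[OF \<alpha> U(1)] _ congruence_refl[OF \<alpha> U(3)]]
        tev_congruence[OF \<gamma> p congruence_refl[OF \<gamma> U(1)] _ congruence_refl[OF \<gamma> U(3)]]
      by blast
    then show C: "(x, tev A p x u v) \<in> ?C"
      by (simp only: p_left)
    have "(tev A p x u v, tev A p x x z) \<in> \<beta>"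
      using tev_congruence[OF \<beta> p congruence_refl[OF \<beta> U(1)] congruence_sym[OF \<beta> xu] vz] .
    moreover have "(x, tev A p x x z) \<in> \<alpha>"
      using tev_congruence[OF \<alpha> p congruence_refl[OF \<alpha> U(1)] congruence_sym[OF \<alpha> xz]
          congruence_refl[OF \<alpha> U(4)]] by (simp only: p_right)
    moreover have "t 0 = tev A p x x z"
      by (simp add: t_def s_def p_j1)
    moreover have "(tev A p x u v, x) \<in> \<alpha>"
      using C congruence_sym[OF \<alpha>] by blast
    ultimately show "(tev A p x u v, t 0) \<in> ?B"
      using congruence_trans[OF \<alpha>] by simp
  qed
  have step: "(t k, t (Suc k)) \<in> ?B O ?C O ?B" if k: "k < n" for k
  proof -
    let ?J = "j (Suc k)"
    have J: "ternary_term ar ?J" and J_idem: "\<And>y. y \<in> univ A \<Longrightarrow> tev A ?J x y x = x"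
      using j j_idem k by auto
    have "(x, z) \<in> \<beta> O \<gamma> O \<beta>" and "(z, x) \<in> \<beta> O \<gamma> O \<beta>"
      using xu uv vz congruence_sym[OF \<beta>] congruence_sym[OF \<gamma>] by blast+
    then obtain c c' where "(s k, c) \<in> \<beta>" "(c, c') \<in> \<gamma>" "(c', s (Suc k)) \<in> \<beta>"
      unfolding s_def by (cases "even k") auto
    then have "(tev A ?J x (s k) z, tev A ?J x (s (Suc k)) z) \<in> ?B O ?C O ?B"
      using tev_middle_congruence[OF \<alpha> \<beta> J xz J_idem] tev_middle_congruence[OF \<alpha> \<gamma> J xz J_idem]
      by blast
    moreover have "tev A ?J x (s (Suc k)) z = t (Suc k)"
      using j_odd[of "Suc k"] j_even[of "Suc k"] k by (simp add: t_def s_def)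
    ultimately show ?thesis
      by (simp add: t_def)
  qed
  have chain: "(x, t k) \<in> (?C O ?B) ^^ Suc k" if "k \<le> n" for k
    using that
  proof (induction k)
    case 0
    then show ?case using first by simp
  next
    case (Suc k)
    then have "(x, t k) \<in> (?C O ?B) ^^ Suc k" and "(t k, t (Suc k)) \<in> ?B O ?C O ?B"
      using step by simp_all
    then have "(x, t (Suc k)) \<in> (?C O ?B) ^^ Suc k O (?B O ?C O ?B)"
      by (rule relcompI)
    then show ?case
      by (rule subsetD[OF relpow_relcomp_absorb[OF B_trans]])
  qed
  have "t n = z"
    using j_last U by (simp add: t_def s_def)
  then show ?thesis
    using chain[of n] by simp
qed

theorem proposition5p2:
  fixes ar :: "'f \<Rightarrow> nat" and \<Sigma> :: "('f uterm \<times> 'f uterm) set" and n :: nat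
  assumes "has_gumm_terms ar (variety ar \<Sigma> :: ('f, 'a) alg set) n"
  shows "\<forall>A \<in> (variety ar \<Sigma> :: ('f, 'a) alg set). \<forall>\<alpha> \<beta> \<gamma>.
           congruence ar A \<alpha> \<and> congruence ar A \<beta> \<and> congruence ar A \<gamma> \<longrightarrow>
           \<alpha> \<inter> (\<beta> O (\<alpha> \<inter> \<gamma>) O \<beta>) \<subseteq> rcomp_alt (\<alpha> \<inter> \<beta>) (\<alpha> \<inter> \<gamma>) (2*n+2)"
proof (intro ballI allI impI subsetI, elim conjE)
  fix A :: "('f, 'a) alg" and \<alpha> \<beta> \<gamma> and xz
  assume AV: "A \<in> variety ar \<Sigma>" and \<alpha>: "congruence ar A \<alpha>"
    and \<beta>: "congruence ar A \<beta>" and \<gamma>: "congruence ar A \<gamma>"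
    and xz: "xz \<in> \<alpha> \<inter> (\<beta> O (\<alpha> \<inter> \<gamma>) O \<beta>)"
  obtain p j where p: "ternary_term ar p" and j: "\<forall>i\<in>{1..n+1}. ternary_term ar (j i)"
    and ids: "gumm_identities A n p j"
    using assms AV unfolding has_gumm_terms_iff by blast
  obtain x z where xz_def: "xz = (x, z)" by force
  have sym_B: "sym (\<alpha> \<inter> \<beta>)" and sym_C: "sym (\<alpha> \<inter> \<gamma>)"
    using \<alpha> \<beta> \<gamma> by (meson congruence_equiv equivE sym_Int)+
  have "(z, x) \<in> \<alpha>" "(z, x) \<in> \<beta> O (\<alpha> \<inter> \<gamma>) O \<beta>"
    using xz sym_C congruence_sym[OF \<alpha>] congruence_sym[OF \<beta>] unfolding xz_def sym_def by blast+
  then have "(z, x) \<in> ((\<alpha> \<inter> \<gamma>) O (\<alpha> \<inter> \<beta>)) ^^ Suc n"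
    by (rule gumm_chain[OF \<alpha> \<beta> \<gamma> p j ids])
  then have "(x, z) \<in> (((\<alpha> \<inter> \<gamma>) O (\<alpha> \<inter> \<beta>)) ^^ Suc n)\<inverse>"
    by simp
  also have "\<dots> = ((\<alpha> \<inter> \<beta>) O (\<alpha> \<inter> \<gamma>)) ^^ Suc n"
    using sym_B sym_C by (simp only: converse_relpow converse_relcomp sym_conv_converse_eq)
  finally show "xz \<in> rcomp_alt (\<alpha> \<inter> \<beta>) (\<alpha> \<inter> \<gamma>) (2*n+2)"
    unfolding xz_def rcomp_alt_even by simp
qed

end
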